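(* On a complex $3$-dimensional torus $T^3$ there is a hermitian metric $\omega$ satisfying \[ \frac{\sqrt{-1}}{2}\,\partial\bar\partial\omega\wedge\omega>0\quad\text{on } T^3 . \]
   Context: A hermitian metric is identified with its positive real $(1,1)$-form $\omega$; a real $(3,3)$-form is $>0$ if it is a positive multiple of $\omega^3$ at every point. *)

theory Defs
  imports "HOL-Analysis.Analysis"
begin

text \<open>A complex 3-torus is C^3 modulo a lattice Lambda = Z v_0 + ... + Z v_5 generated by
  six R-linearly independent vectors.  Objects on the torus are Lambda-periodic
  objects on C^3.\<close>

definition lattice :: "(nat \<Rightarrow> complex^3) \<Rightarrow> (complex^3) set" where
  "lattice v = {(\<Sum>i<6. of_int (n i) *\<^sub>R v i) | n :: nat \<Rightarrow> int. True}"

definition is_lattice_basis :: "(nat \<Rightarrow> complex^3) \<Rightarrow> bool" where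
  "is_lattice_basis v \<longleftrightarrow> inj_on v {..<6} \<and> independent (v ` {..<6})"

definition periodic_wrt :: "(complex^3) set \<Rightarrow> (complex^3 \<Rightarrow> 'b) \<Rightarrow> bool" where
  "periodic_wrt L f \<longleftrightarrow> (\<forall>z. \<forall>l\<in>L. f (z + l) = f z)"

fun iter_dderiv :: "(complex^3 \<Rightarrow> complex) \<Rightarrow> (complex^3) list \<Rightarrow> complex^3 \<Rightarrow> complex" where
  "iter_dderiv f [] = f"
| "iter_dderiv f (v # vs) = iter_dderiv (\<lambda>z. frechet_derivative f (at z) v) vs"

definition smooth_fun :: "(complex^3 \<Rightarrow> complex) \<Rightarrow> bool" where
  "smooth_fun f \<longleftrightarrow> (\<forall>vs z. iter_dderiv f vs differentiable (at z))"

text \<open>Wirtinger derivatives d/dz_a = (d/dx_a - i d/dy_a)/2 and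
  d/dzbar_a = (d/dx_a + i d/dy_a)/2, where z_a = x_a + i y_a.\<close>

definition dz :: "3 \<Rightarrow> (complex^3 \<Rightarrow> complex) \<Rightarrow> complex^3 \<Rightarrow> complex" where
  "dz a f z = (frechet_derivative f (at z) (axis a 1)
               - \<i> * frechet_derivative f (at z) (axis a \<i>)) / 2"

definition dzbar :: "3 \<Rightarrow> (complex^3 \<Rightarrow> complex) \<Rightarrow> complex^3 \<Rightarrow> complex" where
  "dzbar a f z = (frechet_derivative f (at z) (axis a 1)
               + \<i> * frechet_derivative f (at z) (axis a \<i>)) / 2"

text \<open>A hermitian metric on C^3/L, given by its coefficient matrix h, i.e.
  omega = (sqrt(-1)/2) * Sum_{j,k} h j k dz_j wedge dzbar_k,
  with h smooth, L-periodic, hermitian and positive definite at every point.\<close>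

definition hermitian_metric_on_torus ::
  "(complex^3) set \<Rightarrow> (3 \<Rightarrow> 3 \<Rightarrow> complex^3 \<Rightarrow> complex) \<Rightarrow> bool" where
  "hermitian_metric_on_torus L h \<longleftrightarrow>
     (\<forall>j k. smooth_fun (h j k) \<and> periodic_wrt L (h j k)) \<and>
     (\<forall>z j k. h k j z = cnj (h j k z)) \<and>
     (\<forall>z. \<forall>\<xi>::complex^3. \<xi> \<noteq> 0 \<longrightarrow>
          0 < Re (\<Sum>j\<in>UNIV. \<Sum>k\<in>UNIV. h j k z * \<xi> $ j * cnj (\<xi> $ k)))"

text \<open>Sign of the permutation (a,b,c) of (1,2,3), zero if not distinct:
  dz_a wedge dz_b wedge dz_c = eps3 a b c * dz_1 wedge dz_2 wedge dz_3.\<close>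

definition eps3 :: "3 \<Rightarrow> 3 \<Rightarrow> 3 \<Rightarrow> complex" where
  "eps3 a b c = complex_of_real
     (det (vector [axis a (1::real), axis b 1, axis c 1] :: real^3^3))"

text \<open>Coefficients of (3,3)-forms with respect to the basis form
  Phi = dz_1 wedge dzbar_1 wedge dz_2 wedge dzbar_2 wedge dz_3 wedge dzbar_3.
  We use  (dz_a dzbar_b)(dz_j dzbar_k)(dz_p dzbar_q) = eps3 a j p * eps3 b k q * Phi.\<close>

definition omega_cube_coeff :: "(3 \<Rightarrow> 3 \<Rightarrow> complex^3 \<Rightarrow> complex) \<Rightarrow> complex^3 \<Rightarrow> complex" where
  "omega_cube_coeff h z = (\<i>/2)^3 *
     (\<Sum>a\<in>UNIV. \<Sum>b\<in>UNIV. \<Sum>j\<in>UNIV. \<Sum>k\<in>UNIV. \<Sum>p\<in>UNIV. \<Sum>q\<in>UNIV.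
        eps3 a j p * eps3 b k q * h a b z * h j k z * h p q z)"

text \<open>Coefficient of (sqrt(-1)/2) ddbar omega wedge omega, using
  ddbar (f dz_j wedge dzbar_k) = Sum_{a,b} (d/dz_a d/dzbar_b f) dz_a wedge dzbar_b wedge dz_j wedge dzbar_k.\<close>
definition ddbar_omega_wedge_omega_coeff ::
  "(3 \<Rightarrow> 3 \<Rightarrow> complex^3 \<Rightarrow> complex) \<Rightarrow> complex^3 \<Rightarrow> complex" where
  "ddbar_omega_wedge_omega_coeff h z = (\<i>/2) * (\<i>/2) * (\<i>/2) *
     (\<Sum>a\<in>UNIV. \<Sum>b\<in>UNIV. \<Sum>j\<in>UNIV. \<Sum>k\<in>UNIV. \<Sum>p\<in>UNIV. \<Sum>q\<in>UNIV.
        eps3 a j p * eps3 b k q * dz a (dzbar b (h j k)) z * h p q z)"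

definition positive_33_form ::
  "(complex^3 \<Rightarrow> complex) \<Rightarrow> (3 \<Rightarrow> 3 \<Rightarrow> complex^3 \<Rightarrow> complex) \<Rightarrow> bool" where
  "positive_33_form c h \<longleftrightarrow> (\<forall>z. \<exists>r::real. r > 0 \<and> c z = of_real r * omega_cube_coeff h z)"

end

theory Submission
  imports Defs "HOL-Complex_Analysis.Complex_Analysis"
begin

text \<open>Choose a real linear functional \<open>\<ell>\<close> on \<open>\<complex>\<^sup>3\<close> mapping the lattice into \<open>2\<pi>\<int>\<close> and take the
  diagonal metric \<open>h\<^sub>j\<^sub>j = H\<^sub>j(\<ell> z)\<close>, \<open>H\<^sub>j = exp (10 u\<^sub>j)\<close>, with \<open>u\<^sub>1 = sin\<close>, \<open>u\<^sub>2 = cos\<close>, \<open>u\<^sub>3 = sin + cos\<close>.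
  It is periodic, and smooth because each \<open>H\<^sub>j\<close> extends to an entire function. Since \<open>h\<close> depends
  only on \<open>t = \<ell> z\<close>, we get \<open>dz a (dzbar b h\<^sub>j\<^sub>j) = H\<^sub>j''(t) \<gamma>\<^sub>a\<^sup>* \<gamma>\<^sub>b\<close> with \<open>\<gamma> = dzbar_coeff \<ell>\<close>, so
  \<open>ddbar_omega_wedge_omega_coeff h\<close> is \<open>(\<i>/2)\<^sup>3 \<Sum> |\<gamma>\<^sub>m|\<^sup>2 (H\<^sub>i'' H\<^sub>j + H\<^sub>j'' H\<^sub>i)\<close>, summed over
  \<open>{i,j,m} = {1,2,3}\<close>, while \<open>omega_cube_coeff h = 6 (\<i>/2)\<^sup>3 H\<^sub>1 H\<^sub>2 H\<^sub>3\<close>. Each bracket is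
  \<open>H\<^sub>i H\<^sub>j (100 (u\<^sub>i'\<^sup>2 + u\<^sub>j'\<^sup>2) - 10 (u\<^sub>i + u\<^sub>j))\<close>, positive because \<open>u\<^sub>i'\<^sup>2 + u\<^sub>j'\<^sup>2 \<ge> 1/3\<close> and
  \<open>u\<^sub>i + u\<^sub>j \<le> 3\<close>, and some \<open>\<gamma>\<^sub>m \<noteq> 0\<close> because \<open>\<ell> \<noteq> 0\<close>.\<close>

section \<open>A functional dual to the lattice\<close>

lemma lattice_dual_functional_exists:
  fixes v :: "nat \<Rightarrow> complex^3"
  assumes "is_lattice_basis v"
  shows "\<exists>ell::complex^3 \<Rightarrow> real. linear ell \<and> ell (v 0) = 2*pi \<and>
           (\<forall>l\<in>lattice v. \<exists>n::int. ell l = 2*pi * of_int n)"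
proof -
  have inj: "inj_on v {..<6}" and ind: "independent (v ` {..<6})"
    using assms unfolding is_lattice_basis_def by simp_all
  obtain ell :: "complex^3 \<Rightarrow> real" where lin: "linear ell"
    and e: "\<forall>x\<in>v ` {..<6}. ell x = (if x = v 0 then 2*pi else 0)"
    using linear_independent_extend[OF ind, of "\<lambda>x. if x = v 0 then 2*pi else 0"] by blast
  have ell_v: "ell (v i) = (if i = 0 then 2*pi else 0)" if "i < 6" for i
  proof -
    have "v i = v 0 \<longleftrightarrow> i = 0" using inj that unfolding inj_on_def by auto
    thus ?thesis using bspec[OF e, of "v i"] that by simp
  qed
  have "\<exists>n::int. ell l = 2*pi * of_int n" if "l \<in> lattice v" for l
  proof -
    from that obtain n :: "nat \<Rightarrow> int" where l: "l = (\<Sum>i<6. of_int (n i) *\<^sub>R v i)"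
      unfolding lattice_def by blast
    have "ell l = (\<Sum>i<6. of_int (n i) * ell (v i))"
      unfolding l by (simp add: linear_sum[OF lin] linear_scale[OF lin])
    also have "\<dots> = (\<Sum>i::nat<6. if i = 0 then 2*pi * of_int (n 0) else 0)"
      by (rule sum.cong) (auto simp: ell_v)
    finally show ?thesis by auto
  qed
  with lin ell_v[of 0] show ?thesis by auto
qed

section \<open>Entire functions of a real linear functional\<close>

lemma has_derivative_entire_comp_functional:
  fixes ell :: "'a::euclidean_space \<Rightarrow> real" and G :: "complex \<Rightarrow> complex"
  assumes "linear ell" and "G holomorphic_on UNIV"
  shows "((\<lambda>z. G (of_real (ell z))) has_derivative
           (\<lambda>w. deriv G (of_real (ell z)) * of_real (ell w))) (at z)"
proof -
  have "(ell has_derivative ell) (at z)"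
    using assms(1) by (simp add: linear_conv_bounded_linear bounded_linear_imp_has_derivative)
  hence inner: "((\<lambda>z. of_real (ell z) :: complex) has_derivative (\<lambda>w. of_real (ell w))) (at z)"
    using has_derivative_of_real by fastforce
  have "(G has_field_derivative deriv G (of_real (ell z))) (at (of_real (ell z)))"
    using assms(2) by (meson DERIV_deriv_iff_field_differentiable UNIV_I
        holomorphic_on_imp_differentiable_at open_UNIV)
  hence "(G has_derivative (\<lambda>x. deriv G (of_real (ell z)) * x)) (at (of_real (ell z)))"
    by (simp add: has_field_derivative_def)
  from has_derivative_compose[OF inner this] show ?thesis by (simp add: o_def)
qed

lemma frechet_derivative_entire_comp_functional:
  fixes ell :: "'a::euclidean_space \<Rightarrow> real" and G :: "complex \<Rightarrow> complex"
  assumes "linear ell" and "G holomorphic_on UNIV"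
  shows "frechet_derivative (\<lambda>z. G (of_real (ell z))) (at z) w
           = deriv G (of_real (ell z)) * of_real (ell w)"
  using frechet_derivative_at[OF has_derivative_entire_comp_functional[OF assms]] by metis

lemma smooth_fun_entire_comp_functional:
  fixes ell :: "complex^3 \<Rightarrow> real" and G :: "complex \<Rightarrow> complex"
  assumes "linear ell" and "G holomorphic_on UNIV"
  shows "smooth_fun (\<lambda>z. G (of_real (ell z)))"
  unfolding smooth_fun_def
proof (intro allI)
  fix vs z
  show "iter_dderiv (\<lambda>z. G (of_real (ell z))) vs differentiable (at z)"
    using assms(2)
  proof (induction vs arbitrary: G)
    case Nil
    then show ?case
      using differentiableI[OF has_derivative_entire_comp_functional[OF assms(1)]] by simp
  next
    case (Cons v vs)
    \<comment> \<open>a directional derivative is again an entire function of \<open>\<ell> z\<close>\<close>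
    have "(\<lambda>z. frechet_derivative (\<lambda>z. G (of_real (ell z))) (at z) v)
          = (\<lambda>z. (\<lambda>w. of_real (ell v) * deriv G w) (of_real (ell z)))"
      using frechet_derivative_entire_comp_functional[OF assms(1) Cons.prems]
      by (simp add: mult.commute)
    moreover have "(\<lambda>w. of_real (ell v) * deriv G w) holomorphic_on UNIV"
      using Cons.prems by (simp add: holomorphic_deriv holomorphic_on_mult)
    ultimately show ?case using Cons.IH by simp
  qed
qed

text \<open>\<open>dzbar_coeff \<ell> b = \<partial>\<ell>/\<partial>z\<^sub>b\<^sub>\<dagger>\<close>; since \<open>\<ell>\<close> is real, \<open>\<partial>\<ell>/\<partial>z\<^sub>a\<close> is its conjugate.\<close>

definition dzbar_coeff :: "(complex^3 \<Rightarrow> real) \<Rightarrow> 3 \<Rightarrow> complex" where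
  "dzbar_coeff ell b = (of_real (ell (axis b 1)) + \<i> * of_real (ell (axis b \<i>))) / 2"

lemma dzbar_entire_comp_functional:
  fixes ell :: "complex^3 \<Rightarrow> real" and G :: "complex \<Rightarrow> complex"
  assumes "linear ell" and "G holomorphic_on UNIV"
  shows "dzbar b (\<lambda>z. G (of_real (ell z))) = (\<lambda>z. dzbar_coeff ell b * deriv G (of_real (ell z)))"
  unfolding dzbar_def dzbar_coeff_def frechet_derivative_entire_comp_functional[OF assms]
  by (simp add: algebra_simps)

lemma dz_entire_comp_functional:
  fixes ell :: "complex^3 \<Rightarrow> real" and G :: "complex \<Rightarrow> complex"
  assumes "linear ell" and "G holomorphic_on UNIV"
  shows "dz a (\<lambda>z. G (of_real (ell z))) z = cnj (dzbar_coeff ell a) * deriv G (of_real (ell z))"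
  unfolding dz_def dzbar_coeff_def frechet_derivative_entire_comp_functional[OF assms]
  by (simp add: algebra_simps)

lemma dz_dzbar_entire_comp_functional:
  fixes ell :: "complex^3 \<Rightarrow> real" and G :: "complex \<Rightarrow> complex"
  assumes "linear ell" and "G holomorphic_on UNIV"
  shows "dz a (dzbar b (\<lambda>z. G (of_real (ell z)))) z
           = cnj (dzbar_coeff ell a) * dzbar_coeff ell b * deriv (deriv G) (of_real (ell z))"
proof -
  let ?G' = "\<lambda>w. dzbar_coeff ell b * deriv G w"
  have holo: "?G' holomorphic_on UNIV"
    using assms(2) by (simp add: holomorphic_deriv holomorphic_on_mult)
  have "deriv ?G' w = dzbar_coeff ell b * deriv (deriv G) w" for w
    using holomorphic_deriv[OF assms(2) open_UNIV]
    by (intro deriv_cmult) (simp add: holomorphic_on_imp_differentiable_at)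
  then show ?thesis
    using dz_entire_comp_functional[OF assms(1) holo]
    by (simp add: dzbar_entire_comp_functional[OF assms] mult.assoc)
qed

lemma dzbar_coeff_nonzero:
  fixes ell :: "complex^3 \<Rightarrow> real"
  assumes lin: "linear ell" and "ell w \<noteq> 0"
  shows "\<exists>m. dzbar_coeff ell m \<noteq> 0"
proof (rule ccontr)
  assume "\<nexists>m. dzbar_coeff ell m \<noteq> 0"
  hence axes: "ell (axis m 1) = 0" "ell (axis m \<i>) = 0" for m
    unfolding dzbar_coeff_def by (simp_all add: complex_eq_iff)
  have w_decomp: "w = (\<Sum>m\<in>UNIV. Re (w$m) *\<^sub>R axis m 1 + Im (w$m) *\<^sub>R axis m \<i>)"
    by (simp add: vec_eq_iff sum_3 axis_def complex_eq_iff) (metis exhaust_3)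
  have "ell w = (\<Sum>m\<in>UNIV. Re (w$m) * ell (axis m 1) + Im (w$m) * ell (axis m \<i>))"
    by (subst w_decomp) (simp add: linear_sum[OF lin] linear_add[OF lin] linear_scale[OF lin])
  with axes \<open>ell w \<noteq> 0\<close> show False by simp
qed

section \<open>Diagonal metrics\<close>

lemma eps3_values:
  "eps3 1 1 1 = 0" "eps3 1 1 2 = 0" "eps3 1 1 3 = 0" "eps3 1 2 1 = 0" "eps3 1 2 2 = 0"
  "eps3 1 2 3 = 1" "eps3 1 3 1 = 0" "eps3 1 3 2 = -1" "eps3 1 3 3 = 0"
  "eps3 2 1 1 = 0" "eps3 2 1 2 = 0" "eps3 2 1 3 = -1" "eps3 2 2 1 = 0" "eps3 2 2 2 = 0"
  "eps3 2 2 3 = 0" "eps3 2 3 1 = 1" "eps3 2 3 2 = 0" "eps3 2 3 3 = 0"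
  "eps3 3 1 1 = 0" "eps3 3 1 2 = 1" "eps3 3 1 3 = 0" "eps3 3 2 1 = -1" "eps3 3 2 2 = 0"
  "eps3 3 2 3 = 0" "eps3 3 3 1 = 0" "eps3 3 3 2 = 0" "eps3 3 3 3 = 0"
  by (simp_all add: eps3_def det_3 axis_def)

lemma omega_cube_coeff_diagonal:
  fixes h :: "3 \<Rightarrow> 3 \<Rightarrow> complex^3 \<Rightarrow> complex" and H :: "3 \<Rightarrow> real"
  assumes "\<And>j k. h j k z = (if j = k then of_real (H j) else 0)"
  shows "omega_cube_coeff h z = (\<i>/2)^3 * of_real (6 * H 1 * H 2 * H 3)"
  unfolding omega_cube_coeff_def assms by (simp add: sum_3 eps3_values)

lemma ddbar_omega_wedge_omega_coeff_diagonal: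
  fixes h :: "3 \<Rightarrow> 3 \<Rightarrow> complex^3 \<Rightarrow> complex" and H D :: "3 \<Rightarrow> real" and g :: "3 \<Rightarrow> complex"
  assumes hh: "\<And>j k. h j k z = (if j = k then of_real (H j) else 0)"
    and dd: "\<And>a b j k. dz a (dzbar b (h j k)) z = (if j = k then of_real (D j) else 0) * cnj (g a) * g b"
  shows "ddbar_omega_wedge_omega_coeff h z = (\<i>/2)^3 * of_real (
             (cmod (g 1))\<^sup>2 * (D 2 * H 3 + D 3 * H 2)
           + (cmod (g 2))\<^sup>2 * (D 1 * H 3 + D 3 * H 1)
           + (cmod (g 3))\<^sup>2 * (D 1 * H 2 + D 2 * H 1))"
proof -
  have "ddbar_omega_wedge_omega_coeff h z = (\<i>/2)^3 *
           (g 1 * cnj (g 1) * (of_real (D 2) * of_real (H 3) + of_real (D 3) * of_real (H 2))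
          + g 2 * cnj (g 2) * (of_real (D 1) * of_real (H 3) + of_real (D 3) * of_real (H 1))
          + g 3 * cnj (g 3) * (of_real (D 1) * of_real (H 2) + of_real (D 2) * of_real (H 1)))"
    unfolding ddbar_omega_wedge_omega_coeff_def hh dd
    by (simp add: sum_3 eps3_values algebra_simps power3_eq_cube)
  then show ?thesis by (simp only: of_real_add of_real_mult complex_norm_square)
qed

lemma ddbar_omega_wedge_omega_diagonal_positive:
  fixes h :: "3 \<Rightarrow> 3 \<Rightarrow> complex^3 \<Rightarrow> complex" and H D :: "3 \<Rightarrow> real" and g :: "3 \<Rightarrow> complex"
  assumes hh: "\<And>j k. h j k z = (if j = k then of_real (H j) else 0)"
    and dd: "\<And>a b j k. dz a (dzbar b (h j k)) z = (if j = k then of_real (D j) else 0) * cnj (g a) * g b"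
    and H_pos: "\<And>j. 0 < H j"
    and pair_pos: "\<And>i j. i \<noteq> j \<Longrightarrow> 0 < D i * H j + D j * H i"
    and "g m \<noteq> 0"
  shows "\<exists>r>0. ddbar_omega_wedge_omega_coeff h z = of_real r * omega_cube_coeff h z"
proof -
  define S where "S = (cmod (g 1))\<^sup>2 * (D 2 * H 3 + D 3 * H 2)
           + (cmod (g 2))\<^sup>2 * (D 1 * H 3 + D 3 * H 1)
           + (cmod (g 3))\<^sup>2 * (D 1 * H 2 + D 2 * H 1)"
  define W where "W = 6 * H 1 * H 2 * H 3"
  have "W > 0" unfolding W_def using H_pos by simp
  have P: "0 < D 2 * H 3 + D 3 * H 2" "0 < D 1 * H 3 + D 3 * H 1" "0 < D 1 * H 2 + D 2 * H 1"
    by (simp_all add: pair_pos)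
  have "0 \<le> (cmod (g a))\<^sup>2 * x" "0 < (cmod (g m))\<^sup>2 * x" if "0 < x" for a x
    using that \<open>g m \<noteq> 0\<close> by simp_all
  with P exhaust_3[of m] have "S > 0"
    unfolding S_def by (smt (verit))
  have "ddbar_omega_wedge_omega_coeff h z = (\<i>/2)^3 * of_real S"
    unfolding S_def by (rule ddbar_omega_wedge_omega_coeff_diagonal[of h z H, OF hh dd])
  moreover have "omega_cube_coeff h z = (\<i>/2)^3 * of_real W"
    unfolding W_def by (rule omega_cube_coeff_diagonal[of h z H, OF hh])
  ultimately have "ddbar_omega_wedge_omega_coeff h z = of_real (S / W) * omega_cube_coeff h z"
    using \<open>W > 0\<close> by simp
  with \<open>S > 0\<close> \<open>W > 0\<close> show ?thesis by (intro exI[of _ "S / W"]) simp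
qed

lemma diagonal_positive_definite:
  fixes H :: "'n::finite \<Rightarrow> real" and \<xi> :: "complex^'n"
  assumes "\<And>j. 0 < H j" and "\<xi> \<noteq> 0"
  shows "0 < Re (\<Sum>j\<in>UNIV. \<Sum>k\<in>UNIV. (if j = k then of_real (H j) else 0) * \<xi>$j * cnj (\<xi>$k))"
proof -
  obtain m where "\<xi>$m \<noteq> 0" using assms(2) by (auto simp: vec_eq_iff)
  have "Re (\<Sum>j\<in>UNIV. \<Sum>k\<in>UNIV. (if j = k then of_real (H j) else 0) * \<xi>$j * cnj (\<xi>$k))
      = (\<Sum>j\<in>UNIV. H j * (cmod (\<xi>$j))\<^sup>2)"
    unfolding cmod_power2
    by (simp add: if_distrib[of "\<lambda>x. x * _"] cong: if_cong) (simp add: power2_eq_square algebra_simps)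
  also have "\<dots> > 0"
  proof (rule sum_pos2[where i = m])
    show "0 \<le> H j * (cmod (\<xi>$j))\<^sup>2" for j
      using assms(1)[of j] by simp
    show "0 < H m * (cmod (\<xi>$m))\<^sup>2"
      using assms(1)[of m] \<open>\<xi>$m \<noteq> 0\<close> by simp
  qed auto
  finally show ?thesis .
qed

section \<open>The trigonometric weights\<close>

definition wave :: "3 \<Rightarrow> 'a::{real_normed_field,banach} \<Rightarrow> 'a" where
  "wave j t = (if j = 1 then sin t else if j = 2 then cos t else sin t + cos t)"

definition wave_deriv :: "3 \<Rightarrow> 'a::{real_normed_field,banach} \<Rightarrow> 'a" where
  "wave_deriv j t = (if j = 1 then cos t else if j = 2 then - sin t else cos t - sin t)"

definition weight :: "3 \<Rightarrow> 'a::{real_normed_field,banach} \<Rightarrow> 'a" where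
  "weight j t = exp (10 * wave j t)"

definition weight_deriv2 :: "3 \<Rightarrow> 'a::{real_normed_field,banach} \<Rightarrow> 'a" where
  "weight_deriv2 j t = (100 * (wave_deriv j t)\<^sup>2 - 10 * wave j t) * weight j t"

lemma has_field_derivative_wave: "(wave j has_field_derivative wave_deriv j t) (at t)"
  unfolding wave_def wave_deriv_def by (auto intro!: derivative_eq_intros)

lemma has_field_derivative_wave_deriv: "(wave_deriv j has_field_derivative - wave j t) (at t)"
  unfolding wave_def wave_deriv_def by (auto intro!: derivative_eq_intros)

lemma has_field_derivative_weight:
  "(weight j has_field_derivative 10 * wave_deriv j t * weight j t) (at t)"
  unfolding weight_def using has_field_derivative_wave[of j t]
  by (auto intro!: derivative_eq_intros simp: algebra_simps)

lemma weight_holomorphic: "(weight j :: complex \<Rightarrow> complex) holomorphic_on UNIV"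
  using has_field_derivative_weight by (meson UNIV_I field_differentiable_def
      holomorphic_on_def field_differentiable_at_within)

lemma deriv_deriv_weight: "deriv (deriv (weight j)) = (weight_deriv2 j :: complex \<Rightarrow> complex)"
proof -
  have "deriv (weight j) = (\<lambda>t::complex. 10 * wave_deriv j t * weight j t)"
    using has_field_derivative_weight DERIV_imp_deriv by blast
  moreover have "((\<lambda>t. 10 * wave_deriv j t * weight j t) has_field_derivative weight_deriv2 j t) (at t)"
    for t :: complex
    unfolding weight_deriv2_def
    using has_field_derivative_wave_deriv[of j t] has_field_derivative_weight[of j t]
    by (auto intro!: derivative_eq_intros simp: algebra_simps power2_eq_square)
  ultimately show ?thesis using DERIV_imp_deriv by fastforce
qed

lemma wave_of_real: "wave j (of_real t) = of_real (wave j t)"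
  and wave_deriv_of_real: "wave_deriv j (of_real t) = of_real (wave_deriv j t)"
  unfolding wave_def wave_deriv_def by (simp_all add: sin_of_real cos_of_real)

lemma weight_of_real: "weight j (of_real t) = of_real (weight j t)"
  and weight_deriv2_of_real: "weight_deriv2 j (of_real t) = of_real (weight_deriv2 j t)"
  unfolding weight_deriv2_def weight_def wave_of_real wave_deriv_of_real
  by (simp_all add: exp_of_real[symmetric])

lemma wave_periodic: "wave j (t + 2*pi * of_int n) = wave j (t::real)"
  unfolding wave_def by (simp add: sin_add cos_add)

lemma weight_pos: "0 < weight j (t::real)"
  unfolding weight_def by simp

lemma wave_pair_bound:
  fixes t :: real
  assumes "i \<noteq> j"
  shows "10 * (wave i t + wave j t) < 100 * ((wave_deriv i t)\<^sup>2 + (wave_deriv j t)\<^sup>2)"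
proof -
  define s c where "s = sin t" and "c = cos t"
  have "s\<^sup>2 + c\<^sup>2 = 1" "\<bar>s\<bar> \<le> 1" "\<bar>c\<bar> \<le> 1" unfolding s_def c_def by simp_all
  then have sc: "s\<^sup>2 + c\<^sup>2 = 1" "s + c \<le> 2" "2 * s + c \<le> 3" "s + 2 * c \<le> 3"
    by (simp_all add: abs_le_iff)
  have "s\<^sup>2 + (c - s)\<^sup>2 - 1/3 = (5 * (s - 3 * c/5)\<^sup>2 + c\<^sup>2/5)/3"
    using sc(1) by (simp add: power2_eq_square algebra_simps)
  moreover have "0 \<le> (5 * (s - 3 * c/5)\<^sup>2 + c\<^sup>2/5)/3" by simp
  ultimately have b1: "s\<^sup>2 + (c - s)\<^sup>2 \<ge> 1/3" by linarith
  have "c\<^sup>2 + (c - s)\<^sup>2 - 1/3 = (5 * (c - 3 * s/5)\<^sup>2 + s\<^sup>2/5)/3"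
    using sc(1) by (simp add: power2_eq_square algebra_simps)
  moreover have "0 \<le> (5 * (c - 3 * s/5)\<^sup>2 + s\<^sup>2/5)/3" by simp
  ultimately have b2: "c\<^sup>2 + (c - s)\<^sup>2 \<ge> 1/3" by linarith
  have "10 * (wave 1 t + wave 2 t) < 100 * ((wave_deriv 1 t)\<^sup>2 + (wave_deriv 2 t)\<^sup>2)"
    using sc by (simp add: wave_def wave_deriv_def flip: s_def c_def; argo)
  moreover have "10 * (wave 1 t + wave 3 t) < 100 * ((wave_deriv 1 t)\<^sup>2 + (wave_deriv 3 t)\<^sup>2)"
    using sc b2 by (simp add: wave_def wave_deriv_def flip: s_def c_def; argo)
  moreover have "10 * (wave 2 t + wave 3 t) < 100 * ((wave_deriv 2 t)\<^sup>2 + (wave_deriv 3 t)\<^sup>2)"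
    using sc b1 by (simp add: wave_def wave_deriv_def flip: s_def c_def; argo)
  ultimately show ?thesis
    using assms exhaust_3[of i] exhaust_3[of j] by (auto simp: add.commute)
qed

lemma weight_pair_pos:
  fixes t :: real
  assumes "i \<noteq> j"
  shows "0 < weight_deriv2 i t * weight j t + weight_deriv2 j t * weight i t"
proof -
  have "weight_deriv2 i t * weight j t + weight_deriv2 j t * weight i t
      = weight i t * weight j t *
        (100 * ((wave_deriv i t)\<^sup>2 + (wave_deriv j t)\<^sup>2) - 10 * (wave i t + wave j t))"
    unfolding weight_deriv2_def by (simp add: algebra_simps)
  then show ?thesis using wave_pair_bound[OF assms, of t] weight_pos[of i t] weight_pos[of j t]
    by simp
qed

definition wave_metric :: "(complex^3 \<Rightarrow> real) \<Rightarrow> 3 \<Rightarrow> 3 \<Rightarrow> complex^3 \<Rightarrow> complex" where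
  "wave_metric ell j k z = (if j = k then weight j (of_real (ell z)) else 0)"

lemma wave_metric_entire_comp:
  "wave_metric ell j k = (\<lambda>z. (if j = k then weight j else (\<lambda>_. 0)) (of_real (ell z)))"
  and entire_wave_metric_profile:
  "(if j = k then weight j else (\<lambda>_. 0)) holomorphic_on UNIV"
  by (auto simp: wave_metric_def fun_eq_iff weight_holomorphic)

lemma wave_metric_real:
  "wave_metric ell j k z = (if j = k then of_real (weight j (ell z)) else 0)"
  unfolding wave_metric_def weight_of_real ..

lemma hermitian_metric_on_torus_wave_metric:
  fixes ell :: "complex^3 \<Rightarrow> real"
  assumes lin: "linear ell" and L: "\<forall>l\<in>L. \<exists>n::int. ell l = 2*pi * of_int n"
  shows "hermitian_metric_on_torus L (wave_metric ell)"
  unfolding hermitian_metric_on_torus_def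
proof (intro conjI allI impI)
  fix j k
  show "smooth_fun (wave_metric ell j k)"
    unfolding wave_metric_entire_comp
    by (rule smooth_fun_entire_comp_functional[OF lin entire_wave_metric_profile])
  show "periodic_wrt L (wave_metric ell j k)"
    unfolding periodic_wrt_def
  proof (intro allI ballI)
    fix z l assume "l \<in> L"
    then obtain n :: int where "ell l = 2*pi * of_int n" using L by blast
    hence "ell (z + l) = ell z + 2*pi * of_int n" using linear_add[OF lin] by simp
    thus "wave_metric ell j k (z + l) = wave_metric ell j k z"
      unfolding wave_metric_real weight_def by (simp add: wave_periodic)
  qed
next
  fix z j k
  show "wave_metric ell k j z = cnj (wave_metric ell j k z)"
    unfolding wave_metric_real by simp
next
  fix z and \<xi> :: "complex^3"
  assume "\<xi> \<noteq> 0"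
  with diagonal_positive_definite[of "\<lambda>j. weight j (ell z)", OF weight_pos]
  show "0 < Re (\<Sum>j\<in>UNIV. \<Sum>k\<in>UNIV. wave_metric ell j k z * \<xi>$j * cnj (\<xi>$k))"
    unfolding wave_metric_real by blast
qed

lemma positive_33_form_wave_metric:
  fixes ell :: "complex^3 \<Rightarrow> real"
  assumes lin: "linear ell" and "ell w \<noteq> 0"
  shows "positive_33_form (ddbar_omega_wedge_omega_coeff (wave_metric ell)) (wave_metric ell)"
  unfolding positive_33_form_def
proof
  fix z
  obtain m where "dzbar_coeff ell m \<noteq> 0" using dzbar_coeff_nonzero[OF assms] by blast
  have "dz a (dzbar b (wave_metric ell j k)) z
      = (if j = k then of_real (weight_deriv2 j (ell z)) else 0)
        * cnj (dzbar_coeff ell a) * dzbar_coeff ell b" for a b j k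
    unfolding wave_metric_entire_comp
      dz_dzbar_entire_comp_functional[OF lin entire_wave_metric_profile]
    by (simp add: deriv_deriv_weight weight_deriv2_of_real)
  from ddbar_omega_wedge_omega_diagonal_positive[OF wave_metric_real this weight_pos
      weight_pair_pos \<open>dzbar_coeff ell m \<noteq> 0\<close>]
  show "\<exists>r>0. ddbar_omega_wedge_omega_coeff (wave_metric ell) z
              = of_real r * omega_cube_coeff (wave_metric ell) z" .
qed

theorem proposition18:
  fixes v :: "nat \<Rightarrow> complex^3"
  assumes "is_lattice_basis v"
  shows "\<exists>h. hermitian_metric_on_torus (lattice v) h \<and>
             positive_33_form (ddbar_omega_wedge_omega_coeff h) h"
proof -
  obtain ell :: "complex^3 \<Rightarrow> real" where lin: "linear ell" and "ell (v 0) = 2*pi"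
    and L: "\<forall>l\<in>lattice v. \<exists>n::int. ell l = 2*pi * of_int n"
    using lattice_dual_functional_exists[OF assms] by blast
  then have "ell (v 0) \<noteq> 0" by simp
  with lin L show ?thesis
    using hermitian_metric_on_torus_wave_metric positive_33_form_wave_metric by blast
qed

end
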